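(* Let $\Gamma=(V,E)$ be a $2$-connected finite graph and let $$Z_\Gamma(q,v)=\sum_{A\subseteq E}q^{k(A)}v^{|A|},$$ where $k(A)$ is the number of connected components (including isolated vertices) of the spanning subgraph $(V,A)$. Write $Z_\Gamma(q,v)=q\,\widetilde Z_\Gamma(q,v)$ in $\mathbb{C}[q,v]$. Then $\widetilde Z_\Gamma(q,v)$ is irreducible in $\mathbb{C}[q,v]$. The same holds in the variables $(q,y)$ with $y=v+1$.
   Context: A graph is $2$-connected if it has at least three vertices and no vertex whose removal disconnects it. $Z_\Gamma$ is the partition function of the $q$-state Potts model in the Fortuin–Kasteleyn representation; it is divisible by $q$ since $k(A)\ge1$ for all $A$. *)

theory Defs
  imports Complex_Main "HOL-Computational_Algebra.Polynomial_Factorial"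
begin

definition simple_graph :: "'a set \<Rightarrow> 'a set set \<Rightarrow> bool" where
  "simple_graph V E \<longleftrightarrow> finite V \<and> (\<forall>e\<in>E. e \<subseteq> V \<and> card e = 2)"

definition adj :: "'a set set \<Rightarrow> ('a \<times> 'a) set" where
  "adj A = {(x, y). {x, y} \<in> A}"

definition conn_rel :: "'a set \<Rightarrow> 'a set set \<Rightarrow> ('a \<times> 'a) set" where
  "conn_rel V A = {(x, y). x \<in> V \<and> y \<in> V \<and> (x, y) \<in> (adj A)\<^sup>*}"

definition num_components :: "'a set \<Rightarrow> 'a set set \<Rightarrow> nat" where
  "num_components V A = card (V // conn_rel V A)"

definition graph_connected :: "'a set \<Rightarrow> 'a set set \<Rightarrow> bool" where
  "graph_connected V E \<longleftrightarrow> V \<noteq> {} \<and> (\<forall>x\<in>V. \<forall>y\<in>V. (x, y) \<in> (adj E)\<^sup>*)"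

definition delete_vertex_edges :: "'a \<Rightarrow> 'a set set \<Rightarrow> 'a set set" where
  "delete_vertex_edges w E = {e \<in> E. w \<notin> e}"

definition two_connected :: "'a set \<Rightarrow> 'a set set \<Rightarrow> bool" where
  "two_connected V E \<longleftrightarrow> card V \<ge> 3 \<and> graph_connected V E \<and>
     (\<forall>w\<in>V. graph_connected (V - {w}) (delete_vertex_edges w E))"

text \<open>C[q,v] is represented as (C[q])[v], i.e. the type complex poly poly:
  the outer variable is v (resp. y), the coefficients are polynomials in q.\<close>

definition var_q :: "complex poly poly" where
  "var_q = [:[:0, 1:]:]"

definition var_outer :: "complex poly poly" where
  "var_outer = [:0, 1:]"

definition potts_Z :: "'a set \<Rightarrow> 'a set set \<Rightarrow> complex poly poly" where
  "potts_Z V E = (\<Sum>A\<in>Pow E. var_q ^ num_components V A * var_outer ^ card A)"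

text \<open>The same polynomial in the variables (q,y), y = v + 1, i.e. v = y - 1.\<close>
definition potts_Z_y :: "'a set \<Rightarrow> 'a set set \<Rightarrow> complex poly poly" where
  "potts_Z_y V E = (\<Sum>A\<in>Pow E. var_q ^ num_components V A * (var_outer - 1) ^ card A)"

end

(*
  Write Z = q W. Setting q = 1 gives W(1, y) = (sum over A of (y - 1)^|A|) = y^|E|, and W is
  monic of degree |E| in y, so Eisenstein's criterion for the prime q - 1 of C[q] shows that W
  is irreducible as soon as (q - 1)^2 does not divide W(q, 0) = sum over A of (-1)^|A| q^(k(A) - 1).
  The derivative of W(q, 0) at q = 1 is, up to sign, Crapo's beta invariant of the cycle
  matroid of the graph. The cycle matroid of a 2-connected graph is connected, and the beta
  invariant of a connected matroid of positive rank is positive: it satisfies the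
  deletion-contraction recursion, and by Tutte's theorem one of the deletion and the
  contraction of an element stays connected. The statement in (q, v) follows by the
  substitution y = v + 1, which preserves irreducibility.
*)

theory Submission
  imports Defs
begin

section \<open>Crapo's beta invariant\<close>

lemma sum_Pow_power_card:
  fixes x :: "'b::comm_semiring_1"
  assumes "finite F"
  shows "(\<Sum>A\<in>Pow F. x ^ card A) = (x + 1) ^ card F"
  using prod_add[OF assms, of "\<lambda>_. x" "\<lambda>_. 1"] by simp

lemma sum_Pow_neg_one_power_card:
  assumes "finite F" "F \<noteq> {}"
  shows "(\<Sum>A\<in>Pow F. (-1::'b::comm_ring_1) ^ card A) = 0"
  using sum_Pow_power_card[OF assms(1), of "-1::'b"] assms by (simp add: power_0_left)

lemma sum_Pow_remove:
  assumes "finite E" "e \<in> E"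
  shows "(\<Sum>A\<in>Pow E. f A) = (\<Sum>A\<in>Pow (E - {e}). f A) + (\<Sum>A\<in>Pow (E - {e}). f (insert e A))"
proof -
  have "Pow E = Pow (E - {e}) \<union> insert e ` Pow (E - {e})"
    using assms(2) Pow_insert[of e "E - {e}"] by (simp add: insert_absorb)
  moreover have "(\<Sum>A\<in>Pow (E - {e}) \<union> insert e ` Pow (E - {e}). f A) =
      (\<Sum>A\<in>Pow (E - {e}). f A) + (\<Sum>A\<in>insert e ` Pow (E - {e}). f A)"
    using assms(1) by (intro sum.union_disjoint) auto
  moreover have "inj_on (insert e) (Pow (E - {e}))"
    unfolding inj_on_def by blast
  ultimately show ?thesis
    by (simp add: sum.reindex)
qed

locale matroid =
  fixes E :: "'e set" and r :: "'e set \<Rightarrow> nat"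
  assumes finite_ground: "finite E"
    and rank_empty: "r {} = 0"
    and rank_le_card: "A \<subseteq> E \<Longrightarrow> r A \<le> card A"
    and rank_mono: "A \<subseteq> B \<Longrightarrow> B \<subseteq> E \<Longrightarrow> r A \<le> r B"
    and rank_submod: "A \<subseteq> E \<Longrightarrow> B \<subseteq> E \<Longrightarrow> r (A \<union> B) + r (A \<inter> B) \<le> r A + r B"

definition connected_matroid :: "'e set \<Rightarrow> ('e set \<Rightarrow> nat) \<Rightarrow> bool" where
  "connected_matroid E r \<longleftrightarrow> (\<forall>X. X \<noteq> {} \<longrightarrow> X \<subset> E \<longrightarrow> r E < r X + r (E - X))"

definition contract_rank :: "'e \<Rightarrow> ('e set \<Rightarrow> nat) \<Rightarrow> 'e set \<Rightarrow> nat" where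
  "contract_rank e r A = r (insert e A) - r {e}"

definition alternating_rank_sum :: "'e set \<Rightarrow> ('e set \<Rightarrow> nat) \<Rightarrow> int" where
  "alternating_rank_sum E r = (\<Sum>A\<in>Pow E. (-1) ^ card A * int (r A))"

definition crapo_beta :: "'e set \<Rightarrow> ('e set \<Rightarrow> nat) \<Rightarrow> int" where
  "crapo_beta E r = (-1) ^ r E * alternating_rank_sum E r"

lemma connected_matroidD:
  "connected_matroid E r \<Longrightarrow> X \<noteq> {} \<Longrightarrow> X \<subset> E \<Longrightarrow> r E < r X + r (E - X)"
  unfolding connected_matroid_def by blast

context matroid
begin

lemma rank_singleton_le_1: "e \<in> E \<Longrightarrow> r {e} \<le> 1"
  using rank_le_card[of "{e}"] by simp

lemma rank_insert_le: "A \<subseteq> E \<Longrightarrow> e \<in> E \<Longrightarrow> r (insert e A) \<le> r A + r {e}"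
  using rank_submod[of A "{e}"] rank_empty by (cases "e \<in> A") (auto simp: insert_absorb)

lemma matroid_delete: "matroid (E - {e}) r"
proof
  fix A B
  show "A \<subseteq> E - {e} \<Longrightarrow> r A \<le> card A" by (rule rank_le_card) blast
  show "A \<subseteq> B \<Longrightarrow> B \<subseteq> E - {e} \<Longrightarrow> r A \<le> r B" by (rule rank_mono) auto
  show "A \<subseteq> E - {e} \<Longrightarrow> B \<subseteq> E - {e} \<Longrightarrow> r (A \<union> B) + r (A \<inter> B) \<le> r A + r B"
    by (rule rank_submod) auto
qed (use finite_ground rank_empty in auto)

lemma matroid_contract:
  assumes "e \<in> E"
  shows "matroid (E - {e}) (contract_rank e r)"
proof
  have insert_ge: "r {e} \<le> r (insert e A)" if "A \<subseteq> E" for A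
    using rank_mono[of "{e}" "insert e A"] that assms by simp
  show "finite (E - {e})" using finite_ground by simp
  show "contract_rank e r {} = 0" unfolding contract_rank_def by simp
  fix A B
  show "contract_rank e r A \<le> card A" if "A \<subseteq> E - {e}"
  proof -
    have "A \<subseteq> E" using that by blast
    then show ?thesis
      using rank_insert_le[of A e] rank_le_card[of A] assms unfolding contract_rank_def by auto
  qed
  show "contract_rank e r A \<le> contract_rank e r B" if "A \<subseteq> B" "B \<subseteq> E - {e}"
  proof -
    have "r (insert e A) \<le> r (insert e B)" by (rule rank_mono) (use that assms in auto)
    then show ?thesis unfolding contract_rank_def by (rule diff_le_mono)
  qed
  assume "A \<subseteq> E - {e}" "B \<subseteq> E - {e}"
  then have "A \<subseteq> E" "B \<subseteq> E" "A \<union> B \<subseteq> E" "A \<inter> B \<subseteq> E" by auto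
  then have "r (insert e (A \<union> B)) + r (insert e (A \<inter> B)) \<le> r (insert e A) + r (insert e B)"
    using rank_submod[of "insert e A" "insert e B"] assms by auto
  with insert_ge[of "A \<union> B"] insert_ge[of "A \<inter> B"] insert_ge[of A] insert_ge[of B]
    \<open>A \<subseteq> E\<close> \<open>B \<subseteq> E\<close> \<open>A \<union> B \<subseteq> E\<close> \<open>A \<inter> B \<subseteq> E\<close>
  show "contract_rank e r (A \<union> B) + contract_rank e r (A \<inter> B) \<le>
      contract_rank e r A + contract_rank e r B"
    unfolding contract_rank_def by linarith
qed

lemma alternating_rank_sum_delete_contract:
  assumes "e \<in> E" "E - {e} \<noteq> {}"
  shows "alternating_rank_sum E r =
    alternating_rank_sum (E - {e}) r - alternating_rank_sum (E - {e}) (contract_rank e r)"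
proof -
  let ?E' = "E - {e}"
  have "(\<Sum>A\<in>Pow ?E'. (-1) ^ card (insert e A) * int (r (insert e A))) =
      (\<Sum>A\<in>Pow ?E'. - ((-1) ^ card A * int (contract_rank e r A)) - int (r {e}) * (-1) ^ card A)"
  proof (rule sum.cong)
    fix A assume A: "A \<in> Pow ?E'"
    then have "finite A" "e \<notin> A"
      using finite_ground by (auto intro: finite_subset)
    moreover have "r {e} \<le> r (insert e A)"
      using rank_mono[of "{e}" "insert e A"] A assms(1) by auto
    ultimately show "(-1) ^ card (insert e A) * int (r (insert e A)) =
        - ((-1) ^ card A * int (contract_rank e r A)) - int (r {e}) * (-1) ^ card A"
      unfolding contract_rank_def by (simp add: of_nat_diff algebra_simps)
  qed simp
  also have "\<dots> = - alternating_rank_sum ?E' (contract_rank e r)"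
    using sum_Pow_neg_one_power_card[of ?E', where 'b=int] finite_ground assms(2)
    by (simp add: alternating_rank_sum_def sum_subtractf sum_negf sum_distrib_left[symmetric])
  finally show ?thesis
    unfolding alternating_rank_sum_def
    using sum_Pow_remove[OF finite_ground assms(1), of "\<lambda>A. (-1) ^ card A * int (r A)"] by simp
qed

lemma contract_rank_loop:
  assumes "e \<in> E" "r {e} = 0" "A \<subseteq> E - {e}"
  shows "contract_rank e r A = r A"
proof -
  have "A \<subseteq> E" using assms(3) by blast
  then show ?thesis
    using rank_insert_le[of A e] rank_mono[of A "insert e A"] assms(1,2)
    unfolding contract_rank_def by fastforce
qed

lemma contract_rank_coloop:
  assumes "e \<in> E" "r (E - {e}) < r E" "A \<subseteq> E - {e}"
  shows "contract_rank e r A = r A"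
proof -
  have rank_insert: "r (insert e B) = r B + 1" if "B \<subseteq> E - {e}" for B
  proof -
    have "B \<subseteq> E" "insert e B \<union> (E - {e}) = E" "insert e B \<inter> (E - {e}) = B"
      using that assms(1) by auto
    then have "r (insert e B) \<le> r B + 1" "r E + r B \<le> r (insert e B) + r (E - {e})"
      using rank_insert_le[of B e] rank_singleton_le_1[of e] assms(1)
        rank_submod[of "insert e B" "E - {e}"] by auto
    then show ?thesis using assms(2) by linarith
  qed
  show ?thesis
    using rank_insert[of A] rank_insert[of "{}"] rank_empty assms(3)
    unfolding contract_rank_def by simp
qed

lemma alternating_rank_sum_loop_or_coloop:
  assumes "e \<in> E" "E - {e} \<noteq> {}" "r {e} = 0 \<or> r (E - {e}) < r E"
  shows "alternating_rank_sum E r = 0"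
proof -
  have "alternating_rank_sum (E - {e}) (contract_rank e r) = alternating_rank_sum (E - {e}) r"
    unfolding alternating_rank_sum_def
    using contract_rank_loop[OF assms(1)] contract_rank_coloop[OF assms(1)] assms(3)
    by (intro sum.cong) auto
  then show ?thesis using alternating_rank_sum_delete_contract[OF assms(1,2)] by simp
qed

lemma crapo_beta_delete_contract:
  assumes "e \<in> E" "E - {e} \<noteq> {}" "r {e} = 1" "r (E - {e}) = r E"
  shows "crapo_beta E r = crapo_beta (E - {e}) r + crapo_beta (E - {e}) (contract_rank e r)"
proof -
  have "r {e} \<le> r E" using rank_mono[of "{e}" E] assms(1) by simp
  then obtain k where k: "r E = Suc k" using assms(3) by (cases "r E") auto
  have "contract_rank e r (E - {e}) = k"
    using assms(1,3) k by (simp add: contract_rank_def insert_absorb)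
  then show ?thesis
    unfolding crapo_beta_def alternating_rank_sum_delete_contract[OF assms(1,2)] assms(4) k
    by (simp add: algebra_simps)
qed

lemma connected_matroid_no_loop_coloop:
  assumes "connected_matroid E r" "e \<in> E" "E - {e} \<noteq> {}"
  shows "r {e} = 1" "r (E - {e}) = r E"
proof -
  have "r E < r {e} + r (E - {e})"
    using connected_matroidD[OF assms(1), of "{e}"] assms(2,3) by auto
  moreover have "r {e} \<le> 1" using rank_singleton_le_1[OF assms(2)] .
  moreover have "r (E - {e}) \<le> r E" "r {e} \<le> r E"
    using rank_mono[of "E - {e}" E] rank_mono[of "{e}" E] assms(2) by auto
  ultimately show "r {e} = 1" "r (E - {e}) = r E" by linarith+
qed

lemma connected_matroid_rank_pos:
  assumes "connected_matroid E r" "2 \<le> card E"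
  shows "0 < r E"
proof -
  obtain e where e: "e \<in> E" using assms(2) by fastforce
  have "card (E - {e}) \<noteq> 0" using assms(2) e finite_ground by simp
  then have "E - {e} \<noteq> {}" by (metis card.empty)
  moreover have "r {e} \<le> r E" using rank_mono[of "{e}" E] e by simp
  ultimately show ?thesis using connected_matroid_no_loop_coloop(1)[OF assms(1) e] by simp
qed

text \<open>A separation (X, Y) of the deletion and a separation (P, Q) of the contraction
  cannot cross: submodularity applied to X, P + e and to Y, Q + e would separate E.\<close>

lemma separations_do_not_cross:
  assumes conn: "connected_matroid E r" and e: "e \<in> E"
    and XY: "X \<subseteq> E - {e}" "Y = E - {e} - X" and del_sep: "r X + r Y \<le> r E"
    and PQ: "P \<subseteq> E - {e}" "Q = E - {e} - P"
    and con_sep: "r (insert e P) + r (insert e Q) \<le> r E + 1"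
    and cross: "X \<inter> P \<noteq> {}" "Y \<inter> Q \<noteq> {}"
  shows False
proof -
  have sub: "X \<subseteq> E" "Y \<subseteq> E" "insert e P \<subseteq> E" "insert e Q \<subseteq> E"
    and inter: "X \<inter> insert e P = X \<inter> P" "Y \<inter> insert e Q = Y \<inter> Q"
    and split: "E - (X \<inter> P) = Y \<union> insert e Q" "E - (Y \<inter> Q) = X \<union> insert e P"
      "X \<inter> P \<subset> E" "Y \<inter> Q \<subset> E"
    using XY PQ e by auto
  have "r (X \<union> insert e P) + r (X \<inter> P) \<le> r X + r (insert e P)"
    using rank_submod[OF sub(1,3)] unfolding inter .
  moreover have "r (Y \<union> insert e Q) + r (Y \<inter> Q) \<le> r Y + r (insert e Q)"
    using rank_submod[OF sub(2,4)] unfolding inter .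
  moreover have "r E < r (X \<inter> P) + r (Y \<union> insert e Q)"
    using connected_matroidD[OF conn cross(1) split(3)] unfolding split(1) .
  moreover have "r E < r (Y \<inter> Q) + r (X \<union> insert e P)"
    using connected_matroidD[OF conn cross(2) split(4)] unfolding split(2) .
  ultimately show False using del_sep con_sep by linarith
qed

lemma connected_matroid_delete_or_contract:
  assumes conn: "connected_matroid E r" and e: "e \<in> E"
    and "r {e} = 1" "r (E - {e}) = r E"
  shows "connected_matroid (E - {e}) r \<or> connected_matroid (E - {e}) (contract_rank e r)"
proof (rule ccontr)
  assume "\<not> ?thesis"
  then obtain X P where X: "X \<noteq> {}" "X \<subset> E - {e}" "\<not> r (E - {e}) < r X + r (E - {e} - X)"
    and P: "P \<noteq> {}" "P \<subset> E - {e}"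
      "\<not> contract_rank e r (E - {e}) < contract_rank e r P + contract_rank e r (E - {e} - P)"
    unfolding connected_matroid_def by blast
  define Y where "Y = E - {e} - X"
  define Q where "Q = E - {e} - P"
  have "P \<subseteq> E" "Q \<subseteq> E" using P(2) unfolding Q_def by auto
  then have "1 \<le> r (insert e P)" "1 \<le> r (insert e Q)" "1 \<le> r E"
    using rank_mono[of "{e}" "insert e P"] rank_mono[of "{e}" "insert e Q"] rank_mono[of "{e}" E]
      e assms(3) by auto
  moreover have "r (insert e P) - 1 + (r (insert e Q) - 1) \<le> r E - 1"
    using P(3) assms(3) e unfolding Q_def[symmetric] contract_rank_def
    by (simp add: insert_absorb not_less)
  ultimately have con_sep: "r (insert e P) + r (insert e Q) \<le> r E + 1"
    by linarith
  have del_sep: "r X + r Y \<le> r E" using X(3) assms(4) unfolding Y_def by (simp add: not_less)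
  have parts: "X \<subseteq> E - {e}" "P \<subseteq> E - {e}" "Q \<subseteq> E - {e}" "P = E - {e} - Q"
    "Y \<noteq> {}" "Q \<noteq> {}"
    using X(2) P(2) unfolding Y_def Q_def by auto
  have "X \<subseteq> Q \<and> P \<subseteq> Y" if "X \<inter> P = {}"
    using that parts(1,2) unfolding Y_def Q_def by blast
  moreover have "Y \<subseteq> P \<and> Q \<subseteq> X" if "Y \<inter> Q = {}"
    using that parts(2,3) unfolding Y_def Q_def by blast
  ultimately consider "X \<inter> P \<noteq> {}" "Y \<inter> Q \<noteq> {}" | "X \<inter> Q \<noteq> {}" "Y \<inter> P \<noteq> {}"
    using X(1) P(1) parts(5,6) by (metis inf.absorb1 inf.absorb2)
  then show False
  proof cases
    case 1
    show False
      by (rule separations_do_not_cross[OF conn e parts(1) Y_def del_sep parts(2) Q_def con_sep 1])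
  next
    case 2
    show False
      using con_sep separations_do_not_cross[OF conn e parts(1) Y_def del_sep parts(3,4) _ 2]
      by (simp add: add.commute)
  qed
qed

end

lemma crapo_beta_singleton:
  assumes "matroid {e} r"
  shows "crapo_beta {e} r = r {e}"
proof -
  interpret matroid "{e}" r by fact
  have "Pow {e} = {{}, {e}}" by blast
  moreover have "r {e} \<le> 1" by (rule rank_singleton_le_1) simp
  ultimately show ?thesis
    unfolding crapo_beta_def alternating_rank_sum_def
    using rank_empty by (auto simp: le_Suc_eq)
qed

lemma crapo_beta_nonneg:
  assumes "matroid E r"
  shows "0 \<le> crapo_beta E r"
proof -
  have "finite E" using assms by (rule matroid.finite_ground)
  then show ?thesis using assms
  proof (induction E arbitrary: r rule: finite_remove_induct)
    case empty
    then show ?case by (simp add: crapo_beta_def alternating_rank_sum_def matroid.rank_empty)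
  next
    case (remove E)
    interpret matroid E r by fact
    obtain e where e: "e \<in> E" using remove.hyps(2) by blast
    show ?case
    proof (cases "E - {e} = {}")
      case True
      then have "E = {e}" using e by blast
      then show ?thesis using crapo_beta_singleton[of e r] remove.prems by (simp del: One_nat_def)
    next
      case False
      have "r {e} \<le> 1" "r (E - {e}) \<le> r E"
        using rank_singleton_le_1[OF e] rank_mono[of "E - {e}" E] by auto
      then consider "r {e} = 0 \<or> r (E - {e}) < r E" | "r {e} = 1" "r (E - {e}) = r E"
        by linarith
      then show ?thesis
      proof cases
        case 1
        then show ?thesis
          using alternating_rank_sum_loop_or_coloop[OF e False] by (simp add: crapo_beta_def)
      next
        case 2
        then show ?thesis
          using crapo_beta_delete_contract[OF e False 2] e remove.IH[OF e]
            matroid_delete matroid_contract[OF e] by fastforce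
      qed
    qed
  qed
qed

lemma two_le_card_if_not_connected_matroid:
  assumes "finite E" "\<not> connected_matroid E r"
  shows "2 \<le> card E"
proof (rule ccontr)
  assume "\<not> 2 \<le> card E"
  then have all_eq: "x = y" if "x \<in> E" "y \<in> E" for x y
    using card_le_Suc0_iff_eq[OF assms(1)] that by auto
  have "connected_matroid E r"
    unfolding connected_matroid_def
  proof (intro allI impI)
    fix X assume X: "X \<noteq> {}" "X \<subset> E"
    obtain x where "x \<in> X" using X(1) by blast
    moreover obtain y where "y \<in> E" "y \<notin> X" using psubset_imp_ex_mem[OF X(2)] by blast
    ultimately have False using all_eq[of x y] psubsetD[OF X(2)] by blast
    then show "r E < r X + r (E - X)" ..
  qed
  with assms(2) show False by contradiction
qed

lemma crapo_beta_pos: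
  assumes "matroid E r" "connected_matroid E r" "0 < r E"
  shows "0 < crapo_beta E r"
proof -
  have "finite E" using assms(1) by (rule matroid.finite_ground)
  then show ?thesis using assms
  proof (induction E arbitrary: r rule: finite_remove_induct)
    case empty
    then show ?case by (simp add: matroid.rank_empty)
  next
    case (remove E)
    interpret matroid E r by fact
    obtain e where e: "e \<in> E" using remove.hyps(2) by blast
    show ?case
    proof (cases "E - {e} = {}")
      case True
      then have "E = {e}" using e by blast
      then show ?thesis using crapo_beta_singleton[of e r] remove.prems by (simp del: One_nat_def)
    next
      case False
      note no_loop_coloop = connected_matroid_no_loop_coloop[OF remove.prems(2) e False]
      note beta_split = crapo_beta_delete_contract[OF e False no_loop_coloop]
      show ?thesis
      proof (cases "connected_matroid (E - {e}) r")
        case True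
        then have "0 < crapo_beta (E - {e}) r"
          using remove.IH[OF e matroid_delete] no_loop_coloop(2) remove.prems(3) by simp
        then show ?thesis
          using beta_split crapo_beta_nonneg[OF matroid_contract[OF e]] by simp
      next
        case not_conn: False
        then have conn: "connected_matroid (E - {e}) (contract_rank e r)"
          using connected_matroid_delete_or_contract[OF remove.prems(2) e no_loop_coloop] by simp
        have "2 \<le> card (E - {e})"
          using two_le_card_if_not_connected_matroid not_conn finite_ground by blast
        then have "0 < contract_rank e r (E - {e})"
          using matroid.connected_matroid_rank_pos[OF matroid_contract[OF e] conn] by simp
        then have "0 < crapo_beta (E - {e}) (contract_rank e r)"
          using remove.IH[OF e matroid_contract[OF e] conn] by simp
        then show ?thesis
          using beta_split crapo_beta_nonneg[OF matroid_delete[of e]] by simp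
      qed
    qed
  qed
qed

section \<open>Connected components of spanning subgraphs\<close>

lemma sym_adj: "sym (adj A)"
  unfolding adj_def sym_def by (simp add: insert_commute)

lemma adj_mono: "A \<subseteq> B \<Longrightarrow> adj A \<subseteq> adj B"
  unfolding adj_def by auto

lemma rtrancl_adj_sym: "(x, y) \<in> (adj A)\<^sup>* \<Longrightarrow> (y, x) \<in> (adj A)\<^sup>*"
  by (rule symD[OF sym_rtrancl[OF sym_adj]])

lemma rtrancl_insert_both_directions:
  "(x, y) \<in> (insert (u, v) (insert (v, u) S))\<^sup>* \<longleftrightarrow> (x, y) \<in> S\<^sup>* \<or>
     ((x, u) \<in> S\<^sup>* \<or> (x, v) \<in> S\<^sup>*) \<and> ((u, y) \<in> S\<^sup>* \<or> (v, y) \<in> S\<^sup>*)"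
  unfolding rtrancl_insert
  by (simp only: Un_iff mem_Collect_eq case_prod_conv rtrancl.rtrancl_refl simp_thms) blast

lemma adj_insert_edge: "adj (insert {u, v} A) = insert (u, v) (insert (v, u) (adj A))"
  unfolding adj_def by (auto simp: doubleton_eq_iff)

lemma equiv_conn_rel: "equiv V (conn_rel V A)"
proof (rule equivI)
  show "sym (conn_rel V A)"
    unfolding conn_rel_def by (auto intro: symI rtrancl_adj_sym)
  show "trans (conn_rel V A)"
    unfolding conn_rel_def trans_def by (auto intro: rtrancl_trans)
qed (auto simp: conn_rel_def refl_on_def)

lemma conn_rel_mono: "A \<subseteq> B \<Longrightarrow> conn_rel V A \<subseteq> conn_rel V B"
  unfolding conn_rel_def using rtrancl_mono[OF adj_mono] by blast

lemma finite_components: "finite V \<Longrightarrow> finite (V // conn_rel V A)"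
  by (rule finite_quotient) (auto simp: conn_rel_def)

lemma quotient_eq_image: "V // R = (\<lambda>x. R `` {x}) ` V"
  unfolding quotient_def by blast

lemma num_components_le_card: "finite V \<Longrightarrow> num_components V A \<le> card V"
  unfolding num_components_def quotient_eq_image by (rule card_image_le)

lemma num_components_pos: "finite V \<Longrightarrow> V \<noteq> {} \<Longrightarrow> 0 < num_components V A"
  unfolding num_components_def by (rule card_gt_0_iff[THEN iffD2]) (simp add: finite_components)

lemma num_components_empty: "finite V \<Longrightarrow> num_components V {} = card V"
proof -
  have "adj {} = {}" unfolding adj_def by simp
  then have "conn_rel V {} `` {x} = {x}" if "x \<in> V" for x
    using that unfolding conn_rel_def \<open>adj {} = {}\<close> by auto
  then have "V // conn_rel V {} = (\<lambda>x. {x}) ` V"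
    unfolding quotient_eq_image by (rule image_cong[OF refl])
  then show ?thesis
    unfolding num_components_def by (simp add: card_image)
qed

lemma num_components_antimono:
  "finite V \<Longrightarrow> A \<subseteq> B \<Longrightarrow> num_components V B \<le> num_components V A"
  unfolding num_components_def
  by (intro finite_refines_card_le finite_components conn_rel_mono equiv_conn_rel)

lemma num_components_connected: "graph_connected V E \<Longrightarrow> num_components V E = 1"
proof -
  assume "graph_connected V E"
  then have "conn_rel V E `` {x} = V" if "x \<in> V" for x
    using that unfolding graph_connected_def conn_rel_def by blast
  then have "V // conn_rel V E = {V}"
    using \<open>graph_connected V E\<close> unfolding quotient_eq_image graph_connected_def by auto
  then show ?thesis
    unfolding num_components_def by simp
qed

lemma Image_merge_two_classes:
  fixes u v :: 'a
  assumes R: "equiv V R"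
  defines "U \<equiv> R `` {u} \<union> R `` {v}"
  shows "(R \<union> U \<times> U) `` {x} = (if x \<in> U then U else R `` {x})"
proof (cases "x \<in> U")
  case True
  then have "R `` {x} = R `` {u} \<or> R `` {x} = R `` {v}"
    using equiv_class_eq[OF R] unfolding U_def by blast
  then have "R `` {x} \<subseteq> U" unfolding U_def by blast
  then show ?thesis using True by auto
qed auto

lemma quotient_merge_two_classes:
  assumes R: "equiv V R" and uv: "u \<in> V" "v \<in> V"
  defines "U \<equiv> R `` {u} \<union> R `` {v}"
  shows "V // (R \<union> U \<times> U) = insert U (V // R - {R `` {u}, R `` {v}})"
proof -
  note merged_class = Image_merge_two_classes[OF R, of u v, folded U_def]
  have class_eq: "R `` {x} = R `` {u} \<or> R `` {x} = R `` {v}" if "x \<in> U" for x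
    using that equiv_class_eq[OF R] unfolding U_def by blast
  have other_class: "x \<notin> U" if "x \<in> V" "R `` {x} \<noteq> R `` {u}" "R `` {x} \<noteq> R `` {v}" for x
    using that class_eq by blast
  have own_class: "x \<in> R `` {x}" if "x \<in> V" for x
    using equiv_class_self[OF R that] .
  show ?thesis
  proof (rule set_eqI)
    fix C
    show "C \<in> V // (R \<union> U \<times> U) \<longleftrightarrow> C \<in> insert U (V // R - {R `` {u}, R `` {v}})"
    proof
      assume "C \<in> V // (R \<union> U \<times> U)"
      then obtain x where x: "C = (R \<union> U \<times> U) `` {x}" "x \<in> V" by (rule quotientE)
      show "C \<in> insert U (V // R - {R `` {u}, R `` {v}})"
      proof (cases "x \<in> U")
        case False
        then have "R `` {x} \<noteq> R `` {u}" "R `` {x} \<noteq> R `` {v}"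
          using own_class[OF x(2)] unfolding U_def by auto
        then show ?thesis using x False merged_class quotientI[OF x(2)] by simp
      qed (use x merged_class in simp)
    next
      assume C: "C \<in> insert U (V // R - {R `` {u}, R `` {v}})"
      show "C \<in> V // (R \<union> U \<times> U)"
      proof (cases "C = U")
        case True
        have "u \<in> U" using own_class[OF uv(1)] unfolding U_def by blast
        then show ?thesis
          using True merged_class[of u] quotientI[OF uv(1), of "R \<union> U \<times> U"] by simp
      next
        case False
        with C have C': "C \<in> V // R" "C \<noteq> R `` {u}" "C \<noteq> R `` {v}" by auto
        from C'(1) obtain x where x: "C = R `` {x}" "x \<in> V" by (rule quotientE)
        then show ?thesis
          using C' other_class[of x] merged_class[of x] quotientI[OF x(2), of "R \<union> U \<times> U"] by simp
      qed
    qed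
  qed
qed

lemma card_quotient_merge_two_classes:
  assumes R: "equiv V R" and "finite V" and uv: "u \<in> V" "v \<in> V" "(u, v) \<notin> R"
  defines "U \<equiv> R `` {u} \<union> R `` {v}"
  shows "card (V // (R \<union> U \<times> U)) + 1 = card (V // R)"
proof -
  let ?classes = "{R `` {u}, R `` {v}}"
  have distinct: "R `` {u} \<noteq> R `` {v}"
    using uv eq_equiv_class_iff[OF R] by blast
  have "U \<notin> V // R"
  proof
    assume "U \<in> V // R"
    moreover have "u \<in> U" "v \<in> U"
      using equiv_class_self[OF R] uv unfolding U_def by blast+
    ultimately show False
      using uv(3) in_quotient_imp_in_rel[OF R] by blast
  qed
  have fin: "finite (V // R)"
    using finite_quotient[OF \<open>finite V\<close> equiv_type[OF R]] .
  have sub: "?classes \<subseteq> V // R" using uv quotientI by auto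
  have "card (insert U (V // R - ?classes)) = card (V // R - ?classes) + 1"
    using fin \<open>U \<notin> V // R\<close> by simp
  also have "card (V // R - ?classes) = card (V // R) - 2"
    using card_Diff_subset[OF _ sub] distinct by simp
  finally show ?thesis
    using quotient_merge_two_classes[OF R uv(1,2)] card_mono[OF fin sub] distinct
    unfolding U_def by simp
qed

lemma conn_rel_insert_edge:
  fixes A :: "'a set set"
  assumes "u \<in> V" "v \<in> V"
  defines "R \<equiv> conn_rel V A"
  shows "conn_rel V (insert {u, v} A) = R \<union> (R `` {u} \<union> R `` {v}) \<times> (R `` {u} \<union> R `` {v})"
proof -
  have "(x, y) \<in> conn_rel V (insert {u, v} A) \<longleftrightarrow>
      (x, y) \<in> R \<union> (R `` {u} \<union> R `` {v}) \<times> (R `` {u} \<union> R `` {v})" for x y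
    unfolding R_def conn_rel_def adj_insert_edge rtrancl_insert_both_directions
    using assms(1,2) rtrancl_adj_sym[of x u A] rtrancl_adj_sym[of x v A]
      rtrancl_adj_sym[of u x A] rtrancl_adj_sym[of v x A] by auto
  then show ?thesis by auto
qed

lemma conn_rel_insert_connected:
  assumes "(u, v) \<in> conn_rel V A"
  shows "conn_rel V (insert {u, v} A) = conn_rel V A"
proof -
  let ?R = "conn_rel V A"
  have uv: "u \<in> V" "v \<in> V" "?R `` {u} = ?R `` {v}"
    using assms equiv_class_eq[OF equiv_conn_rel assms] unfolding conn_rel_def by auto
  have "?R `` {u} \<times> ?R `` {u} \<subseteq> ?R"
    using equiv_conn_rel[of V A] unfolding equiv_def sym_def trans_def by blast
  then show ?thesis unfolding conn_rel_insert_edge[OF uv(1,2)] uv(3) by blast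
qed

lemma num_components_insert_disconnected:
  assumes "finite V" "u \<in> V" "v \<in> V" "(u, v) \<notin> conn_rel V A"
  shows "num_components V (insert {u, v} A) + 1 = num_components V A"
  unfolding num_components_def conn_rel_insert_edge[OF assms(2,3)]
  by (rule card_quotient_merge_two_classes[OF equiv_conn_rel assms])

lemma simple_graph_edgeE:
  assumes "simple_graph V E" "e \<in> E"
  obtains u v where "e = {u, v}" "u \<noteq> v" "u \<in> V" "v \<in> V"
proof -
  have "e \<subseteq> V" "card e = 2" using assms unfolding simple_graph_def by auto
  then show ?thesis using that by (auto simp: card_2_iff)
qed

lemma simple_graph_finite_edges: "simple_graph V E \<Longrightarrow> finite E"
  unfolding simple_graph_def by (meson Pow_iff finite_Pow_iff rev_finite_subset subsetI)

lemma num_components_insert_edge_ge: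
  assumes "simple_graph V E" "e \<in> E"
  shows "num_components V A \<le> num_components V (insert e A) + 1"
proof -
  obtain u v where uv: "e = {u, v}" "u \<in> V" "v \<in> V" using simple_graph_edgeE[OF assms] by blast
  have "finite V" using assms(1) unfolding simple_graph_def by simp
  then show ?thesis
    using conn_rel_insert_connected[of u v V A] num_components_insert_disconnected[of V u v A] uv
    unfolding num_components_def by (cases "(u, v) \<in> conn_rel V A") auto
qed

lemma card_le_num_components_add_card:
  assumes "simple_graph V E" "A \<subseteq> E"
  shows "card V \<le> num_components V A + card A"
proof -
  have "finite A" using assms simple_graph_finite_edges finite_subset by blast
  then show ?thesis using assms(2)
  proof (induction A rule: finite_induct)
    case empty
    have "finite V" using assms(1) unfolding simple_graph_def by simp
    then show ?case by (simp add: num_components_empty)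
  next
    case (insert e A)
    then show ?case using num_components_insert_edge_ge[OF assms(1), of e A] by simp
  qed
qed

text \<open>Adding an edge merges at most two components, and it merges two in the larger graph
  only if it does so in the smaller one.\<close>

lemma num_components_supermodular:
  assumes g: "simple_graph V E" and "A \<subseteq> E" "B \<subseteq> E"
  shows "num_components V A + num_components V B \<le>
    num_components V (A \<union> B) + num_components V (A \<inter> B)"
proof -
  have fin: "finite V" using g unfolding simple_graph_def by simp
  have "num_components V A + num_components V (A \<inter> B \<union> D) \<le>
      num_components V (A \<union> D) + num_components V (A \<inter> B)"
    if "finite D" "D \<subseteq> E" for D
    using that
  proof (induction D rule: finite_induct)
    case (insert e D)
    have "e \<in> E" using insert.prems by simp
    then obtain u v where uv: "e = {u, v}" "u \<in> V" "v \<in> V"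
      using simple_graph_edgeE[OF g] by blast
    have "conn_rel V (A \<inter> B \<union> D) \<subseteq> conn_rel V (A \<union> D)"
      by (rule conn_rel_mono) blast
    then show ?case
      using insert.IH insert.prems uv
        conn_rel_insert_connected[of u v V "A \<inter> B \<union> D"] conn_rel_insert_connected[of u v V "A \<union> D"]
        num_components_insert_disconnected[OF fin uv(2,3), of "A \<inter> B \<union> D"]
        num_components_insert_disconnected[OF fin uv(2,3), of "A \<union> D"]
      unfolding num_components_def
      by (cases "(u, v) \<in> conn_rel V (A \<inter> B \<union> D)"; cases "(u, v) \<in> conn_rel V (A \<union> D)") auto
  qed simp
  moreover have "A \<inter> B \<union> (B - A) = B" "A \<union> (B - A) = A \<union> B" by auto
  moreover have "finite (B - A)" "B - A \<subseteq> E"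
    using finite_subset[OF assms(3) simple_graph_finite_edges[OF g]] assms(3) by auto
  ultimately show ?thesis by metis
qed

section \<open>The cycle matroid of a 2-connected graph\<close>

definition graphic_rank :: "'a set \<Rightarrow> 'a set set \<Rightarrow> nat" where
  "graphic_rank V A = card V - num_components V A"

lemma matroid_graphic_rank:
  assumes g: "simple_graph V E"
  shows "matroid E (graphic_rank V)"
proof
  have fin: "finite V" using g unfolding simple_graph_def by simp
  note le_card = num_components_le_card[OF fin]
  show "finite E" using simple_graph_finite_edges[OF g] .
  show "graphic_rank V {} = 0"
    unfolding graphic_rank_def num_components_empty[OF fin] by simp
  fix A B
  show "graphic_rank V A \<le> card A" if "A \<subseteq> E"
    using card_le_num_components_add_card[OF g that] unfolding graphic_rank_def by linarith
  show "graphic_rank V A \<le> graphic_rank V B" if "A \<subseteq> B" "B \<subseteq> E"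
    using num_components_antimono[OF fin that(1)] unfolding graphic_rank_def by linarith
  show "graphic_rank V (A \<union> B) + graphic_rank V (A \<inter> B) \<le> graphic_rank V A + graphic_rank V B"
    if "A \<subseteq> E" "B \<subseteq> E"
    using num_components_supermodular[OF g that] le_card[of A] le_card[of B]
      le_card[of "A \<union> B"] le_card[of "A \<inter> B"]
    unfolding graphic_rank_def by linarith
qed

lemma two_connected_vertex_on_edge:
  assumes "two_connected V E" "x \<in> V"
  shows "x \<in> \<Union>E"
proof -
  have "card V \<ge> 3" "graph_connected V E" using assms(1) unfolding two_connected_def by auto
  then have "V - {x} \<noteq> {}" using card_mono[of "{x}" V] by auto
  then obtain y where y: "y \<in> V" "y \<noteq> x" by blast
  then have "(x, y) \<in> (adj E)\<^sup>*"
    using \<open>graph_connected V E\<close> assms(2) unfolding graph_connected_def by blast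
  then obtain z where "(x, z) \<in> adj E"
    using y(2) by (cases rule: converse_rtranclE) auto
  then show ?thesis unfolding adj_def by blast
qed

lemma component_subset_edges:
  assumes "y \<in> conn_rel V X `` {x}"
  shows "y = x \<or> y \<in> \<Union>X"
proof -
  have "(x, y) \<in> (adj X)\<^sup>*" using assms unfolding conn_rel_def by simp
  then show ?thesis
    by (cases rule: rtranclE) (auto simp: adj_def)
qed

lemma component_isolated:
  assumes "x \<in> V" "x \<notin> \<Union>X"
  shows "conn_rel V X `` {x} = {x}"
proof -
  have "y = x" if "(x, y) \<in> (adj X)\<^sup>*" for y
    using that assms(2) by (cases rule: converse_rtranclE) (auto simp: adj_def)
  then show ?thesis
    using equiv_class_self[OF equiv_conn_rel assms(1)] unfolding conn_rel_def by auto
qed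

lemma component_closed_in_vertex_deletion:
  assumes g: "simple_graph V E" and x: "x \<in> V"
    and s: "conn_rel V X `` {x} \<inter> \<Union>(E - X) \<subseteq> {s}"
  defines "C \<equiv> conn_rel V X `` {x}"
  shows "adj (delete_vertex_edges s E) `` (C - {s}) \<subseteq> C - {s}"
proof
  fix q assume "q \<in> adj (delete_vertex_edges s E) `` (C - {s})"
  then obtain p where p: "p \<in> C" "p \<noteq> s" "{p, q} \<in> E" "s \<notin> {p, q}"
    unfolding adj_def delete_vertex_edges_def by blast
  have "{p, q} \<in> X" using p s unfolding C_def by blast
  then have "(x, q) \<in> (adj X)\<^sup>*"
    using p(1) unfolding C_def conn_rel_def adj_def by (auto intro: rtrancl_into_rtrancl)
  moreover have "q \<in> V" using p(3) g unfolding simple_graph_def by blast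
  ultimately show "q \<in> C - {s}" using p(4) x unfolding C_def conn_rel_def by auto
qed

text \<open>A single vertex shared by the component and the remaining edges would be a cut
  vertex.\<close>

lemma two_connected_component_attachments:
  assumes g: "simple_graph V E" and tc: "two_connected V E"
    and XE: "X \<subseteq> E" "X \<noteq> E" and x: "x \<in> \<Union>X"
  shows "2 \<le> card (conn_rel V X `` {x} \<inter> \<Union>(E - X))"
proof (rule ccontr)
  define C where "C = conn_rel V X `` {x}"
  assume "\<not> ?thesis"
  then have few: "card (C \<inter> \<Union>(E - X)) < 2" unfolding C_def by simp
  have finV: "finite V" using g unfolding simple_graph_def by simp
  have CV: "C \<subseteq> V" unfolding C_def conn_rel_def by auto
  obtain e where e: "e \<in> X" "x \<in> e" using x by blast
  then obtain a b where ab: "e = {a, b}" "a \<noteq> b" "a \<in> V" "b \<in> V"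
    using simple_graph_edgeE[OF g] XE(1) by blast
  have xV: "x \<in> V" using e ab by auto
  have "(x, a) \<in> (adj X)\<^sup>*" "(x, b) \<in> (adj X)\<^sup>*"
    using e ab unfolding adj_def by (auto simp: insert_commute)
  then have "a \<in> C" "b \<in> C" using ab(3,4) e ab(1) unfolding C_def conn_rel_def by auto
  obtain s where s: "s \<in> V" "C \<inter> \<Union>(E - X) \<subseteq> {s}"
  proof (cases "C \<inter> \<Union>(E - X) = {}")
    case True
    then show ?thesis using that[of a] ab(3) by blast
  next
    case False
    then have "card (C \<inter> \<Union>(E - X)) = 1"
      using few finite_subset[OF _ finV] CV by (simp add: card_gt_0_iff less_2_cases_iff)
    then obtain t where "C \<inter> \<Union>(E - X) = {t}" by (rule card_1_singletonE)
    then show ?thesis using that[of t] CV by blast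
  qed
  obtain c where c: "c \<in> C" "c \<noteq> s" using \<open>a \<in> C\<close> \<open>b \<in> C\<close> ab(2) by blast
  obtain f where f: "f \<in> E - X" using XE by blast
  then obtain a' b' where "f = {a', b'}" "a' \<noteq> b'" "a' \<in> V" "b' \<in> V"
    using simple_graph_edgeE[OF g] by blast
  then obtain d where d: "d \<in> f" "d \<in> V" "d \<noteq> s" by blast
  then have "d \<notin> C" using s(2) f by blast
  have "(c, d) \<in> (adj (delete_vertex_edges s E))\<^sup>*"
    using tc s(1) c CV d(2,3) unfolding two_connected_def graph_connected_def by blast
  then have "d \<in> C - {s}"
    using Image_closed_trancl[OF component_closed_in_vertex_deletion[OF g xV s(2)[unfolded C_def]]]
      c unfolding C_def by blast
  then show False using \<open>d \<notin> C\<close> by blast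
qed

lemma card_disjoint_family_le:
  assumes "finite S" "finite N" "\<And>C. C \<in> N \<Longrightarrow> k \<le> card (C \<inter> S)"
    and "\<And>C D. C \<in> N \<Longrightarrow> D \<in> N \<Longrightarrow> C \<noteq> D \<Longrightarrow> C \<inter> D = {}"
  shows "k * card N \<le> card S"
proof -
  have "k * card N = (\<Sum>C\<in>N. k)" by simp
  also have "\<dots> \<le> (\<Sum>C\<in>N. card (C \<inter> S))" using assms(3) by (rule sum_mono)
  also have "\<dots> = card (\<Union>C\<in>N. C \<inter> S)"
    using assms(1,2,4) by (intro card_UN_disjoint[symmetric]) auto
  also have "\<dots> \<le> card S" using assms(1) by (intro card_mono) auto
  finally show ?thesis .
qed

lemma num_components_le_attachments:
  assumes g: "simple_graph V E" and tc: "two_connected V E" and XE: "X \<subseteq> E" "X \<noteq> E"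
  shows "2 * num_components V X \<le> 2 * card (V - \<Union>X) + card (\<Union>X \<inter> \<Union>(E - X))"
proof -
  define R where "R = conn_rel V X"
  define S where "S = \<Union>X \<inter> \<Union>(E - X)"
  define N where "N = {C \<in> V // R. C \<subseteq> \<Union>X}"
  have finV: "finite V" using g unfolding simple_graph_def by simp
  have finQ: "finite (V // R)" unfolding R_def by (rule finite_components[OF finV])
  have "S \<subseteq> V" using g XE(1) unfolding S_def simple_graph_def by blast
  then have finS: "finite S" using finV by (rule finite_subset)
  have "V // R \<subseteq> (\<lambda>x. {x}) ` (V - \<Union>X) \<union> N"
  proof
    fix C assume C: "C \<in> V // R"
    then obtain x where x: "C = R `` {x}" "x \<in> V" by (rule quotientE)
    show "C \<in> (\<lambda>x. {x}) ` (V - \<Union>X) \<union> N"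
    proof (cases "x \<in> \<Union>X")
      case True
      then have "C \<subseteq> \<Union>X" using x component_subset_edges[of _ V X x] unfolding R_def by blast
      then show ?thesis using C unfolding N_def by blast
    next
      case False
      then have "C = {x}" using x component_isolated[of x V X] unfolding R_def by simp
      then show ?thesis using x(2) False by blast
    qed
  qed
  then have "card (V // R) \<le> card (V - \<Union>X) + card N"
    using card_mono[of "(\<lambda>x. {x}) ` (V - \<Union>X) \<union> N" "V // R"] finQ finV
      card_Un_le[of "(\<lambda>x. {x}) ` (V - \<Union>X)" N] card_image_le[of "V - \<Union>X" "\<lambda>x. {x}"]
    unfolding N_def by simp
  moreover have "2 * card N \<le> card S"
  proof (rule card_disjoint_family_le[OF finS])
    show "finite N" using finQ unfolding N_def by simp
    show "C \<inter> D = {}" if "C \<in> N" "D \<in> N" "C \<noteq> D" for C D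
      using that quotient_disj[OF equiv_conn_rel[of V X]] unfolding N_def R_def by blast
    show "2 \<le> card (C \<inter> S)" if "C \<in> N" for C
    proof -
      have C: "C \<in> V // R" "C \<subseteq> \<Union>X" using that unfolding N_def by auto
      then obtain x where x: "C = R `` {x}" "x \<in> V" by (elim quotientE)
      then have "x \<in> C" using equiv_class_self[OF equiv_conn_rel] unfolding R_def by simp
      then have "x \<in> \<Union>X" using C(2) by blast
      moreover have "C \<inter> S = C \<inter> \<Union>(E - X)" using C(2) unfolding S_def by blast
      ultimately show ?thesis
        using two_connected_component_attachments[OF g tc XE] x(1) unfolding R_def by simp
    qed
  qed
  ultimately show ?thesis unfolding num_components_def R_def S_def by linarith
qed

lemma num_components_complement_le_card:
  assumes g: "simple_graph V E" and tc: "two_connected V E"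
    and X: "X \<noteq> {}" "X \<subset> E"
  shows "num_components V X + num_components V (E - X) \<le> card V"
proof -
  have finV: "finite V" using g unfolding simple_graph_def by simp
  have "2 * num_components V X \<le> 2 * card (V - \<Union>X) + card (\<Union>X \<inter> \<Union>(E - X))"
    using num_components_le_attachments[OF g tc] X by auto
  moreover have "2 * num_components V (E - X) \<le> 2 * card (V - \<Union>(E - X)) + card (\<Union>X \<inter> \<Union>(E - X))"
    using num_components_le_attachments[OF g tc, of "E - X"] X
    by (auto simp: double_diff Int_commute)
  moreover have "card V = card (V - \<Union>X) + card (V - \<Union>(E - X)) + card (\<Union>X \<inter> \<Union>(E - X))"
  proof -
    have "\<Union>X \<union> \<Union>(E - X) = \<Union>E" using X(2) by blast
    moreover have "\<Union>E \<subseteq> V" using g unfolding simple_graph_def by blast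
    moreover have "V \<subseteq> \<Union>E" using two_connected_vertex_on_edge[OF tc] by blast
    ultimately have sub: "\<Union>X \<union> \<Union>(E - X) \<subseteq> V" and cover: "V \<subseteq> \<Union>X \<union> \<Union>(E - X)"
      by simp_all
    then have "V = (V - \<Union>X) \<union> (V - \<Union>(E - X)) \<union> (\<Union>X \<inter> \<Union>(E - X))"
      by blast
    then have "card V = card ((V - \<Union>X) \<union> (V - \<Union>(E - X)) \<union> (\<Union>X \<inter> \<Union>(E - X)))"
      by (rule arg_cong)
    also have "\<dots> = card ((V - \<Union>X) \<union> (V - \<Union>(E - X))) + card (\<Union>X \<inter> \<Union>(E - X))"
      using finV sub by (intro card_Un_disjoint) (auto intro: finite_subset)
    also have "card ((V - \<Union>X) \<union> (V - \<Union>(E - X))) = card (V - \<Union>X) + card (V - \<Union>(E - X))"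
      using finV cover by (intro card_Un_disjoint) auto
    finally show ?thesis .
  qed
  ultimately show ?thesis by linarith
qed

lemma connected_matroid_graphic_rank:
  assumes g: "simple_graph V E" and tc: "two_connected V E"
  shows "connected_matroid E (graphic_rank V)"
  unfolding connected_matroid_def
proof (intro allI impI)
  fix X assume X: "X \<noteq> {}" "X \<subset> E"
  have finV: "finite V" using g unfolding simple_graph_def by simp
  have "num_components V E = 1" "card V \<ge> 3"
    using tc num_components_connected unfolding two_connected_def by auto
  moreover have "num_components V X + num_components V (E - X) \<le> card V"
    by (rule num_components_complement_le_card[OF g tc X])
  moreover have "num_components V X \<le> card V" "num_components V (E - X) \<le> card V"
    using num_components_le_card[OF finV] by auto
  ultimately show "graphic_rank V E < graphic_rank V X + graphic_rank V (E - X)"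
    unfolding graphic_rank_def by linarith
qed

text \<open>Up to sign, this alternating sum is Crapo's beta invariant of the graphic matroid.\<close>

lemma alternating_sum_num_components_ne_0:
  assumes g: "simple_graph V E" and tc: "two_connected V E"
  shows "(\<Sum>A\<in>Pow E. (-1) ^ card A * int (num_components V A)) \<noteq> 0"
proof -
  have finV: "finite V" using g unfolding simple_graph_def by simp
  have finE: "finite E" using simple_graph_finite_edges[OF g] .
  have "card V \<ge> 3" "num_components V E = 1"
    using tc num_components_connected unfolding two_connected_def by auto
  moreover from this obtain x where "x \<in> V" by fastforce
  then have "E \<noteq> {}" using two_connected_vertex_on_edge[OF tc] by fastforce
  ultimately have "0 < crapo_beta E (graphic_rank V)"
    using crapo_beta_pos[OF matroid_graphic_rank[OF g] connected_matroid_graphic_rank[OF g tc]]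
    unfolding graphic_rank_def by simp
  then have "alternating_rank_sum E (graphic_rank V) \<noteq> 0"
    unfolding crapo_beta_def by auto
  moreover have "alternating_rank_sum E (graphic_rank V) =
      int (card V) * (\<Sum>A\<in>Pow E. (-1) ^ card A) -
      (\<Sum>A\<in>Pow E. (-1) ^ card A * int (num_components V A))"
    unfolding alternating_rank_sum_def graphic_rank_def sum_distrib_left sum_subtractf[symmetric]
    using num_components_le_card[OF finV] by (intro sum.cong) (auto simp: of_nat_diff algebra_simps)
  ultimately show ?thesis
    using sum_Pow_neg_one_power_card[OF finE \<open>E \<noteq> {}\<close>, where 'b=int] by simp
qed

section \<open>Eisenstein's criterion over a polynomial ring\<close>

definition eval_coeffs :: "'a::comm_ring_1 \<Rightarrow> 'a poly poly \<Rightarrow> 'a poly" where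
  "eval_coeffs a p = map_poly (\<lambda>c. poly c a) p"

lemma coeff_eval_coeffs [simp]: "coeff (eval_coeffs a p) n = poly (coeff p n) a"
  unfolding eval_coeffs_def by (simp add: coeff_map_poly)

lemma eval_coeffs_pCons [simp]: "eval_coeffs a (pCons c p) = pCons (poly c a) (eval_coeffs a p)"
  unfolding eval_coeffs_def by (simp add: map_poly_pCons)

lemma eval_coeffs_0 [simp]: "eval_coeffs a 0 = 0"
  by (simp add: eval_coeffs_def)

lemma eval_coeffs_add [simp]: "eval_coeffs a (p + q) = eval_coeffs a p + eval_coeffs a q"
  by (rule poly_eqI) simp

lemma eval_coeffs_mult [simp]: "eval_coeffs a (p * q) = eval_coeffs a p * eval_coeffs a q"
  by (rule poly_eqI) (simp add: coeff_mult poly_sum)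

lemma eval_coeffs_1 [simp]: "eval_coeffs a 1 = 1"
  by (rule poly_eqI) (simp add: coeff_1)

lemma eval_coeffs_power [simp]: "eval_coeffs a (p ^ n) = eval_coeffs a p ^ n"
  by (induction n) simp_all

lemma eval_coeffs_sum: "eval_coeffs a (\<Sum>x\<in>A. f x) = (\<Sum>x\<in>A. eval_coeffs a (f x))"
  by (induction A rule: infinite_finite_induct) simp_all

lemma degree_eval_coeffs_le: "degree (eval_coeffs a p) \<le> degree p"
  unfolding eval_coeffs_def by (rule map_poly_degree_leq)

lemma pderiv_sum: "pderiv (sum f A) = (\<Sum>x\<in>A. pderiv (f x))"
  using higher_pderiv_sum[of 1 f A] by simp

lemma poly_0_eq_0_if_mult_eq_var_power:
  fixes p q :: "'a::idom poly"
  assumes "p * q = [:0, 1:] ^ m" "0 < degree p"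
  shows "poly p 0 = 0"
proof -
  have "p \<noteq> 0" "q \<noteq> 0" "p * q \<noteq> 0" using assms by auto
  then have "order 0 (p * q) = order 0 p + order 0 q" "degree (p * q) = degree p + degree q"
    by (simp_all add: order_mult degree_mult_eq)
  moreover have "order 0 (p * q) = m" "degree (p * q) = m"
    using order_power_n_n[of 0 m] degree_linear_power[of 0 m] unfolding assms(1) by simp_all
  moreover have "order 0 q \<le> degree q" using order_degree[OF \<open>q \<noteq> 0\<close>] .
  ultimately have "order 0 p \<noteq> 0" using assms(2) by linarith
  then show ?thesis by (simp add: order_root)
qed

lemma poly_pderiv_eq_0_if_square_dvd:
  fixes p :: "'a::idom poly"
  assumes "[:-a, 1:] ^ 2 dvd p"
  shows "poly (pderiv p) a = 0"
proof -
  obtain g where g: "p = [:-a, 1:] ^ 2 * g" using assms by (rule dvdE)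
  have "p = [:-a, 1:] * ([:-a, 1:] * g)" unfolding g power2_eq_square by (rule mult.assoc)
  then have "pderiv p = [:-a, 1:] * pderiv ([:-a, 1:] * g) + ([:-a, 1:] * g) * pderiv [:-a, 1:]"
    by (simp only: pderiv_mult)
  moreover have "poly [:-a, 1:] a = 0" by simp
  ultimately show ?thesis by (simp only: poly_mult poly_add) simp
qed

text \<open>Eisenstein's criterion for the prime q - a of the coefficient ring: the hypothesis
  on eval_coeffs says that all non-leading coefficients vanish at a.\<close>

lemma eisenstein_criterion:
  fixes W :: "'a::idom poly poly"
  assumes deg: "degree W = m" "0 < m" and monic: "lead_coeff W = 1"
    and spec: "eval_coeffs a W = [:0, 1:] ^ m"
    and not_sq: "\<not> [:-a, 1:] ^ 2 dvd coeff W 0"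
  shows "irreducible W"
proof (rule irreducibleI)
  show "W \<noteq> 0" using monic by auto
  show "\<not> W dvd 1" using deg by (auto simp: is_unit_poly_iff)
  fix P Q assume W: "W = P * Q"
  have "lead_coeff P * lead_coeff Q = 1" using monic unfolding W lead_coeff_mult .
  then have "lead_coeff P dvd 1" "lead_coeff Q dvd 1"
    by (metis dvd_triv_left dvd_triv_right)+
  then obtain c d where cd: "lead_coeff P = [:c:]" "lead_coeff Q = [:d:]" "c dvd 1" "d dvd 1"
    by (auto simp: is_unit_poly_iff)
  have degree_eval: "degree (eval_coeffs a R) = degree R" if "lead_coeff R = [:e:]" "e dvd 1"
    for R :: "'a poly poly" and e
    using that degree_eval_coeffs_le[of a R] le_degree[of "eval_coeffs a R" "degree R"]
    by (cases "e = 0") auto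
  have const_unit: "R dvd 1" if "degree R = 0" "lead_coeff R = [:e:]" "e dvd 1"
    for R :: "'a poly poly" and e
  proof -
    have "R = [:[:e:]:]" using degree_0_id[OF that(1)] that(1,2) by simp
    moreover have "[:e:] dvd 1" using that(3) is_unit_poly_iff[of "[:e:]"] by blast
    ultimately show ?thesis using is_unit_poly_iff[of "[:[:e:]:]"] by blast
  qed
  have root: "[:-a, 1:] dvd coeff R 0"
    if "eval_coeffs a R * S = [:0, 1:] ^ m" "0 < degree R" "lead_coeff R = [:e:]" "e dvd 1"
    for R :: "'a poly poly" and S e
  proof -
    have "poly (eval_coeffs a R) 0 = 0"
      using poly_0_eq_0_if_mult_eq_var_power that degree_eval by metis
    then show ?thesis by (simp add: poly_0_coeff_0 poly_eq_0_iff_dvd)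
  qed
  show "P dvd 1 \<or> Q dvd 1"
  proof (rule ccontr)
    assume "\<not> ?thesis"
    then have "0 < degree P" "0 < degree Q" using const_unit cd by blast+
    moreover have "eval_coeffs a P * eval_coeffs a Q = [:0, 1:] ^ m"
      using spec unfolding W by simp
    ultimately have "[:-a, 1:] dvd coeff P 0" "[:-a, 1:] dvd coeff Q 0"
      using root[of P "eval_coeffs a Q"] root[of Q "eval_coeffs a P"] cd
      by (simp_all add: mult.commute)
    then have "[:-a, 1:] ^ 2 dvd coeff W 0"
      unfolding W coeff_mult_0 power2_eq_square by (rule mult_dvd_mono)
    then show False using not_sq by contradiction
  qed
qed

lemma is_unit_pcompose_shift_iff:
  fixes p :: "'a::idom poly"
  shows "pcompose p [:c, 1:] dvd 1 \<longleftrightarrow> p dvd 1"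
proof -
  have unit_degree: "q dvd 1 \<Longrightarrow> degree q = 0" for q :: "'a poly"
    by (auto simp: is_unit_poly_iff)
  have "degree (pcompose p [:c, 1:]) = degree p" by (simp add: degree_pcompose)
  moreover have "pcompose p [:c, 1:] = p" if "degree p = 0"
    using degree_0_id[OF that] pcompose_const by metis
  ultimately show ?thesis using unit_degree by metis
qed

lemma irreducible_pcompose_shift:
  fixes p :: "'a::idom poly"
  assumes irr: "irreducible p"
  shows "irreducible (pcompose p [:c, 1:])"
proof (rule irreducibleI)
  have shift_back: "pcompose (pcompose r [:c, 1:]) [:-c, 1:] = r" for r :: "'a poly"
    by (simp add: pcompose_assoc[symmetric] pcompose_pCons)
  show "pcompose p [:c, 1:] \<noteq> 0"
    using shift_back[of p] irr by (auto simp: irreducible_def)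
  show "\<not> pcompose p [:c, 1:] dvd 1"
    using irreducible_not_unit[OF irr] by (simp add: is_unit_pcompose_shift_iff)
  fix a b assume "pcompose p [:c, 1:] = a * b"
  then have "p = pcompose a [:-c, 1:] * pcompose b [:-c, 1:]"
    using shift_back[of p] by (simp add: pcompose_mult)
  then have "pcompose a [:-c, 1:] dvd 1 \<or> pcompose b [:-c, 1:] dvd 1"
    using irr by (simp add: irreducible_def)
  then show "a dvd 1 \<or> b dvd 1" by (simp add: is_unit_pcompose_shift_iff)
qed

section \<open>The reduced partition function\<close>

text \<open>Z divided by q; the truncated subtraction k(A) - 1 is exact as soon as V is nonempty.\<close>

definition reduced_potts_Z :: "'a set \<Rightarrow> 'a set set \<Rightarrow> complex poly poly" where
  "reduced_potts_Z V E = (\<Sum>A\<in>Pow E. var_q ^ (num_components V A - 1) * var_outer ^ card A)"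

definition reduced_potts_Z_y :: "'a set \<Rightarrow> 'a set set \<Rightarrow> complex poly poly" where
  "reduced_potts_Z_y V E =
    (\<Sum>A\<in>Pow E. var_q ^ (num_components V A - 1) * (var_outer - 1) ^ card A)"

lemma var_q_power_num_components:
  assumes "finite V" "V \<noteq> {}"
  shows "var_q ^ num_components V A = var_q * var_q ^ (num_components V A - 1)"
  using num_components_pos[OF assms, of A] by (simp add: power_eq_if)

lemma potts_Z_eq_var_q_mult:
  "finite V \<Longrightarrow> V \<noteq> {} \<Longrightarrow> potts_Z V E = var_q * reduced_potts_Z V E"
  unfolding potts_Z_def reduced_potts_Z_def sum_distrib_left
  by (simp add: var_q_power_num_components mult.assoc)

lemma potts_Z_y_eq_var_q_mult:
  "finite V \<Longrightarrow> V \<noteq> {} \<Longrightarrow> potts_Z_y V E = var_q * reduced_potts_Z_y V E"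
  unfolding potts_Z_y_def reduced_potts_Z_y_def sum_distrib_left
  by (simp add: var_q_power_num_components mult.assoc)

lemma reduced_potts_Z_pcompose: "reduced_potts_Z V E = pcompose (reduced_potts_Z_y V E) [:1, 1:]"
proof -
  have "pcompose (p ^ n) [:1, 1:] = pcompose p [:1, 1:] ^ n" for p :: "complex poly poly" and n
    by (induction n) (simp_all add: pcompose_mult pcompose_1)
  moreover have "pcompose var_q [:1, 1:] = var_q" "pcompose (var_outer - 1) [:1, 1:] = var_outer"
    by (simp_all add: var_q_def var_outer_def pcompose_pCons one_pCons)
  ultimately show ?thesis
    unfolding reduced_potts_Z_def reduced_potts_Z_y_def pcompose_sum by (simp add: pcompose_mult)
qed

lemma var_outer_minus_1: "var_outer - 1 = [:-1, 1:]"
  by (simp add: var_outer_def one_pCons)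

lemma potts_y_term: "var_q ^ j * (var_outer - 1) ^ c = smult ([:0, 1:] ^ j) ([:-1, 1:] ^ c)"
  by (simp add: var_q_def var_outer_minus_1 poly_const_pow)

lemma neg_one_poly_power: "(-1 :: 'a::comm_ring_1 poly) ^ n = [:(-1) ^ n:]"
  by (induction n) (simp_all add: one_pCons)

lemma degree_lead_coeff_reduced_potts_Z_y:
  assumes "finite E" "num_components V E = 1"
  shows "degree (reduced_potts_Z_y V E) = card E" "lead_coeff (reduced_potts_Z_y V E) = 1"
proof -
  define T where "T A = var_q ^ (num_components V A - 1) * (var_outer - 1) ^ card A" for A
  have degree_T: "degree (T A) = card A" for A
    unfolding T_def potts_y_term by (simp add: degree_linear_power)
  have "coeff (T A) (card E) = 0" if "A \<in> Pow E - {E}" for A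
    using that psubset_card_mono[OF assms(1), of A] degree_T[of A] by (intro coeff_eq_0) auto
  moreover have "coeff (T E) (card E) = 1"
    unfolding T_def potts_y_term assms(2) by (simp add: coeff_linear_power)
  ultimately have "coeff (reduced_potts_Z_y V E) (card E) = 1"
    unfolding reduced_potts_Z_y_def T_def[symmetric] coeff_sum
    using sum.remove[of "Pow E" E "\<lambda>A. coeff (T A) (card E)"] assms(1) by simp
  moreover have "degree (reduced_potts_Z_y V E) \<le> card E"
    unfolding reduced_potts_Z_y_def T_def[symmetric] using assms(1) degree_T
    by (intro degree_sum_le) (auto intro: card_mono)
  ultimately show "degree (reduced_potts_Z_y V E) = card E"
    by (simp add: le_antisym le_degree)
  with \<open>coeff (reduced_potts_Z_y V E) (card E) = 1\<close> show "lead_coeff (reduced_potts_Z_y V E) = 1"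
    by simp
qed

lemma eval_coeffs_reduced_potts_Z_y:
  assumes "finite E"
  shows "eval_coeffs 1 (reduced_potts_Z_y V E) = [:0, 1:] ^ card E"
proof -
  have "eval_coeffs 1 (reduced_potts_Z_y V E) = (\<Sum>A\<in>Pow E. [:-1, 1:] ^ card A)"
    unfolding reduced_potts_Z_y_def eval_coeffs_sum var_outer_minus_1
    by (simp add: var_q_def one_pCons[symmetric])
  also have "\<dots> = [:0, 1:] ^ card E"
    using sum_Pow_power_card[OF assms, of "[:-1, 1:] :: complex poly"] by (simp add: one_pCons)
  finally show ?thesis .
qed

lemma poly_pderiv_coeff_0_reduced_potts_Z_y:
  assumes "finite V" "V \<noteq> {}" "finite E" "E \<noteq> {}"
  shows "poly (pderiv (coeff (reduced_potts_Z_y V E) 0)) 1 =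
    of_int (\<Sum>A\<in>Pow E. (-1) ^ card A * int (num_components V A))"
proof -
  have "coeff (reduced_potts_Z_y V E) 0 =
      (\<Sum>A\<in>Pow E. monom ((-1) ^ card A) (num_components V A - 1))"
    unfolding reduced_potts_Z_y_def coeff_sum potts_y_term
    by (simp add: monom_altdef coeff_0_power neg_one_poly_power)
  then have "poly (pderiv (coeff (reduced_potts_Z_y V E) 0)) 1 =
      (\<Sum>A\<in>Pow E. (-1) ^ card A * of_nat (num_components V A - 1))"
    by (simp add: pderiv_sum pderiv_monom poly_sum poly_monom mult.commute)
  also have "\<dots> = of_int (\<Sum>A\<in>Pow E. (-1) ^ card A * (int (num_components V A) - 1))"
    using num_components_pos[OF assms(1,2)] by (simp add: of_nat_diff Suc_le_eq)
  also have "\<dots> = of_int (\<Sum>A\<in>Pow E. (-1) ^ card A * int (num_components V A))"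
    using sum_Pow_neg_one_power_card[OF assms(3,4), where 'b=int]
    by (simp add: right_diff_distrib sum_subtractf)
  finally show ?thesis .
qed

lemma irreducible_reduced_potts_Z_y:
  assumes g: "simple_graph V E" and tc: "two_connected V E"
  shows "irreducible (reduced_potts_Z_y V E)"
proof -
  have finite: "finite V" "finite E"
    using g simple_graph_finite_edges unfolding simple_graph_def by auto
  have "card V \<ge> 3" "num_components V E = 1"
    using tc num_components_connected unfolding two_connected_def by auto
  then obtain x where "x \<in> V" by fastforce
  then have nonempty: "V \<noteq> {}" "E \<noteq> {}" using two_connected_vertex_on_edge[OF tc] by auto
  show ?thesis
  proof (rule eisenstein_criterion)
    show "degree (reduced_potts_Z_y V E) = card E" "lead_coeff (reduced_potts_Z_y V E) = 1"
      by (rule degree_lead_coeff_reduced_potts_Z_y[OF finite(2) \<open>num_components V E = 1\<close>])+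
    show "0 < card E" using finite(2) nonempty(2) by (simp add: card_gt_0_iff)
    show "eval_coeffs 1 (reduced_potts_Z_y V E) = [:0, 1:] ^ card E"
      by (rule eval_coeffs_reduced_potts_Z_y[OF finite(2)])
    show "\<not> [:-1, 1:] ^ 2 dvd coeff (reduced_potts_Z_y V E) 0"
    proof
      assume "[:-1, 1:] ^ 2 dvd coeff (reduced_potts_Z_y V E) 0"
      then have "poly (pderiv (coeff (reduced_potts_Z_y V E) 0)) 1 = 0"
        by (rule poly_pderiv_eq_0_if_square_dvd)
      then show False
        using poly_pderiv_coeff_0_reduced_potts_Z_y[OF finite(1) nonempty(1) finite(2) nonempty(2)]
          alternating_sum_num_components_ne_0[OF g tc] by (metis of_int_eq_0_iff)
    qed
  qed
qed

theorem proposition5p1: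
  fixes V :: "'a set" and E :: "'a set set"
  assumes "simple_graph V E" and "two_connected V E"
  shows "(\<forall>Zt. potts_Z V E = var_q * Zt \<longrightarrow> irreducible Zt) \<and>
         (\<forall>Zt. potts_Z_y V E = var_q * Zt \<longrightarrow> irreducible Zt)"
proof -
  have "finite V" "V \<noteq> {}"
    using assms unfolding simple_graph_def two_connected_def by auto
  have irreducible_y: "irreducible (reduced_potts_Z_y V E)"
    by (rule irreducible_reduced_potts_Z_y[OF assms])
  then have "irreducible (reduced_potts_Z V E)"
    unfolding reduced_potts_Z_pcompose by (rule irreducible_pcompose_shift)
  moreover have "var_q \<noteq> 0" by (simp add: var_q_def)
  ultimately show ?thesis
    using irreducible_y potts_Z_eq_var_q_mult[OF \<open>finite V\<close> \<open>V \<noteq> {}\<close>]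
      potts_Z_y_eq_var_q_mult[OF \<open>finite V\<close> \<open>V \<noteq> {}\<close>] by auto
qed

end
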